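(* In the limit $s_1s_2\to1$ one has $$\chi(\mathcal M^{1,1}(M_1,M_2),\mathcal O)_{s_1s_2\to1}=\chi(\mathring{\mathcal M}^{1,1}(M_1,M_2),\mathcal O)_{s_1s_2\to1}.$$ In other words, every $\mathbf T_{\mathrm{edge}}$-fixed point of $\mathcal M^{1,1}(M_1,M_2)$ that lies outside $\mathring{\mathcal M}^{1,1}(M_1,M_2)$ (equivalently, every fixed point for which some $Y^{(2)}_{(i,j)}$ is non-empty) has localization contribution tending to $0$ as $s_1s_2\to1$.
   Context: Fix $\xi>0$ and integers $M_1,M_2\ge0$. $\mathcal M^{1,1}(M_1,M_2)$ is the space of tuples $(X,Y,I,J,\tilde X,\tilde Y,\tilde I,\tilde J,S)$ with $X,Y\in\mathrm{End}(\mathbb C^{M_1})$, $I\in\mathrm{Hom}(\mathbb C,\mathbb C^{M_1})$, $J\in\mathrm{Hom}(\mathbb C^{M_1},\mathbb C)$, $\tilde X,\tilde Y\in\mathrm{End}(\mathbb C^{M_2})$, $\tilde I\in\mathrm{Hom}(\mathbb C,\mathbb C^{M_2})$, $\tilde J\in\mathrm{Hom}(\mathbb C^{M_2},\mathbb C)$, $S\in\mathrm{Hom}(\mathbb C^{M_1},\mathbb C^{M_2})$ satisfying $[X,Y]+IJ=0$, $[\tilde X,\tilde Y]+\tilde I\tilde J=0$ and the stability condition $\mathbb C\langle X,Y\rangle\mathrm{Im}(I)=\mathbb C^{M_1}$, $\mathbb C\langle\tilde X,\tilde Y\rangle(\mathrm{Im}\tilde I+\mathrm{Im}S)=\mathbb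 C^{M_2}$, modulo $GL_{M_1}\times GL_{M_2}$ acting by $(g,h)$: $X\mapsto gXg^{-1}$, $Y\mapsto gYg^{-1}$, $I\mapsto gI$, $J\mapsto Jg^{-1}$, similarly for the tilded maps with $h$, and $S\mapsto hSg^{-1}$. $\mathring{\mathcal M}^{1,1}(M_1,M_2)$ is the open subset where $\mathbb C\langle\tilde X,\tilde Y\rangle\mathrm{Im}(\tilde I)=\mathbb C^{M_2}$. The torus $\mathbf T_{\mathrm{edge}}=(\mathbb C^\times)^5\ni(r_1,r_2,s_1,s_2,t)$ acts by $(X,Y,I,J)\mapsto(r_1X,r_2Y,I,r_1r_2J)$, $(\tilde X,\tilde Y,\tilde I,\tilde J)\mapsto(s_1\tilde X,s_2\tilde Y,\tilde I,s_1s_2\tilde J)$, $S\mapsto tS$. Its fixed points on $\mathcal M^{1,1}(M_1,M_2)$ are isolated and labelled by a Young diagram $Y^{(1)}$ with $M_1$ boxes, a Young diagram $Y^{(2)}_0$, and a Young diagram $Y^{(2)}_{(i,j)}$ for each box $(i,j)\in Y^{(1)}$, with $|Y^{(2)}_0|+\sum|Y^{(2)}_{(i,j)}|=M_2$; the fixed points in $\mathring{\mathcal M}^{1,1}(M_1,M_2)$ are those with all $Y^{(2)}_{(i,j)}=\emptyset$. With $w_r(Y)=\sum_{(i,j)\in Y}r_1^{-i}r_2^{-j}$, $w_s(Y)=\sum_{(i,j)\in Y}s_1^{-i}s_2^{-j}$, set at a fixed point $\mathcal V_1=w_r(Y^{(1)})$, $\mathcal V_2=w_s(Y^{(2)}_0)+t^{-1}\sum_{(i,j)\in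 Y^{(1)}}r_1^{-i}r_2^{-j}w_s(Y^{(2)}_{(i,j)})$ and $T^{\mathrm{vir}}=\mathcal V_1+\mathcal V_1^*r_1r_2-\mathcal V_1\mathcal V_1^*(1-r_1)(1-r_2)+\mathcal V_2+\mathcal V_2^*s_1s_2-\mathcal V_2\mathcal V_2^*(1-s_1)(1-s_2)+t\mathcal V_2\mathcal V_1^*$, where ${}^*$ inverts $r_1,r_2,s_1,s_2,t$. For $\sum_wa_ww$ a Laurent polynomial with integer coefficients, $S^\bullet(\sum a_ww)=\prod_w(1-w)^{-a_w}$. The localization contribution of a fixed point is $(S^\bullet(T^{\mathrm{vir}}))^*$; $\chi(\mathcal M^{1,1}(M_1,M_2),\mathcal O)$ is the sum of contributions over all fixed points and $\chi(\mathring{\mathcal M}^{1,1}(M_1,M_2),\mathcal O)$ is the sum over the fixed points lying in $\mathring{\mathcal M}^{1,1}(M_1,M_2)$. *)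

theory Defs
  imports "HOL-Analysis.Analysis" "HOL-Library.Product_Plus"
begin

(* A Laurent monomial r1^a r2^b s1^c s2^d t^e is its exponent vector (a,b,c,d,e);
   multiplication of monomials is + on exponent vectors (Product_Plus). *)
type_synonym mono = "int \<times> int \<times> int \<times> int \<times> int"

(* A Laurent polynomial with integer coefficients: coefficient function, finite support. *)
type_synonym lpoly = "mono \<Rightarrow> int"

definition lp_supp :: "lpoly \<Rightarrow> mono set" where
  "lp_supp p = {m. p m \<noteq> 0}"

definition lp_mono :: "mono \<Rightarrow> lpoly" where
  "lp_mono c = (\<lambda>m. if m = c then 1 else 0)"

(* sum of the monomials f x, x \<in> A (with multiplicity) *)
definition lp_sum :: "'x set \<Rightarrow> ('x \<Rightarrow> mono) \<Rightarrow> lpoly" where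
  "lp_sum A f = (\<lambda>m. int (card {x \<in> A. f x = m}))"

definition lp_add :: "lpoly \<Rightarrow> lpoly \<Rightarrow> lpoly" where
  "lp_add p q = (\<lambda>m. p m + q m)"

definition lp_sub :: "lpoly \<Rightarrow> lpoly \<Rightarrow> lpoly" where
  "lp_sub p q = (\<lambda>m. p m - q m)"

definition lp_mul :: "lpoly \<Rightarrow> lpoly \<Rightarrow> lpoly" where
  "lp_mul p q = (\<lambda>m. \<Sum>a\<in>lp_supp p. p a * q (m - a))"

(* multiplication by the monomial c *)
definition lp_shift :: "mono \<Rightarrow> lpoly \<Rightarrow> lpoly" where
  "lp_shift c p = (\<lambda>m. p (m - c))"

(* the involution * inverting all of r1,r2,s1,s2,t *)
definition lp_dual :: "lpoly \<Rightarrow> lpoly" where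
  "lp_dual p = (\<lambda>m. p (- m))"

abbreviation "m_r1 \<equiv> ((1,0,0,0,0) :: mono)"
abbreviation "m_r2 \<equiv> ((0,1,0,0,0) :: mono)"
abbreviation "m_s1 \<equiv> ((0,0,1,0,0) :: mono)"
abbreviation "m_s2 \<equiv> ((0,0,0,1,0) :: mono)"
abbreviation "m_t  \<equiv> ((0,0,0,0,1) :: mono)"

fun mono_eval :: "mono \<Rightarrow> complex \<times> complex \<times> complex \<times> complex \<times> complex \<Rightarrow> complex" where
  "mono_eval (a,b,c,d,e) (r1,r2,s1,s2,t) =
     r1 powi a * r2 powi b * s1 powi c * s2 powi d * t powi e"

(* (S^\<bullet>(\<Sum> a_w w))^* = \<Prod>_w (1 - w^{-1})^{-a_w}, evaluated at a point *)
definition contrib_of :: "lpoly \<Rightarrow> complex \<times> complex \<times> complex \<times> complex \<times> complex \<Rightarrow> complex" where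
  "contrib_of T z = (\<Prod>w\<in>lp_supp T. (1 - mono_eval (- w) z) powi (- T w))"

definition young :: "(nat \<times> nat) set \<Rightarrow> bool" where
  "young Y \<longleftrightarrow> finite Y \<and> (\<forall>i j i' j'. (i,j) \<in> Y \<longrightarrow> i' \<le> i \<longrightarrow> j' \<le> j \<longrightarrow> (i',j') \<in> Y)"

(* a fixed-point label (Y1, Y2_0, box \<mapsto> Y2_(i,j)) *)
type_synonym fp = "(nat \<times> nat) set \<times> (nat \<times> nat) set \<times> (nat \<times> nat \<Rightarrow> (nat \<times> nat) set)"

definition fixed_points :: "nat \<Rightarrow> nat \<Rightarrow> fp set" where
  "fixed_points M1 M2 = {(Y1, Y0, Y2).
      young Y1 \<and> card Y1 = M1 \<and> young Y0 \<and>
      (\<forall>b\<in>Y1. young (Y2 b)) \<and> (\<forall>b. b \<notin> Y1 \<longrightarrow> Y2 b = {}) \<and>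
      card Y0 + (\<Sum>b\<in>Y1. card (Y2 b)) = M2}"

definition ring_fixed_points :: "nat \<Rightarrow> nat \<Rightarrow> fp set" where
  "ring_fixed_points M1 M2 = {(Y1, Y0, Y2) \<in> fixed_points M1 M2. \<forall>b \<in> Y1. Y2 b = {}}"

definition V1_of :: "fp \<Rightarrow> lpoly" where
  "V1_of p = (case p of (Y1, Y0, Y2) \<Rightarrow>
     lp_sum Y1 (\<lambda>(i,j). (- int i, - int j, 0, 0, 0)))"

definition V2_of :: "fp \<Rightarrow> lpoly" where
  "V2_of p = (case p of (Y1, Y0, Y2) \<Rightarrow>
     lp_add (lp_sum Y0 (\<lambda>(k,l). (0, 0, - int k, - int l, 0)))
            (lp_sum (SIGMA b:Y1. Y2 b)
               (\<lambda>((i,j),(k,l)). (- int i, - int j, - int k, - int l, -1))))"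

definition one_minus_sq :: "mono \<Rightarrow> mono \<Rightarrow> lpoly" where
  "one_minus_sq x y = lp_mul (lp_sub (lp_mono 0) (lp_mono x)) (lp_sub (lp_mono 0) (lp_mono y))"

definition Tvir :: "fp \<Rightarrow> lpoly" where
  "Tvir p = (let V1 = V1_of p; V2 = V2_of p in
     (\<lambda>m. V1 m + lp_shift (m_r1 + m_r2) (lp_dual V1) m
          - lp_mul (lp_mul V1 (lp_dual V1)) (one_minus_sq m_r1 m_r2) m
          + V2 m + lp_shift (m_s1 + m_s2) (lp_dual V2) m
          - lp_mul (lp_mul V2 (lp_dual V2)) (one_minus_sq m_s1 m_s2) m
          + lp_shift m_t (lp_mul V2 (lp_dual V1)) m))"

definition contrib :: "fp \<Rightarrow> complex \<times> complex \<times> complex \<times> complex \<times> complex \<Rightarrow> complex" where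
  "contrib p z = contrib_of (Tvir p) z"

definition chi_M :: "nat \<Rightarrow> nat \<Rightarrow> complex \<times> complex \<times> complex \<times> complex \<times> complex \<Rightarrow> complex" where
  "chi_M M1 M2 z = (\<Sum>p\<in>fixed_points M1 M2. contrib p z)"

definition chi_Mring :: "nat \<Rightarrow> nat \<Rightarrow> complex \<times> complex \<times> complex \<times> complex \<times> complex \<Rightarrow> complex" where
  "chi_Mring M1 M2 z = (\<Sum>p\<in>ring_fixed_points M1 M2. contrib p z)"

end

(* Put s2 = q / s1.  A monomial r1^a r2^b s1^c s2^d t^e then equals r1^a r2^b s1^(c - d) t^e q^d, so at a
   generic point it tends to 1 as q -> 1 exactly when it is diagonal (a = b = e = 0 and c = d), and then
   1 - q^(-c) vanishes to first order.  Hence the contribution of a fixed point behaves like (q - 1)^K, where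
   -K is the sum of the coefficients of T^vir at the diagonal monomials, and it suffices to show K > 0 when
   some Y2_(i,j) is nonempty.  Term by term, the r-part of T^vir contributes nothing to this sum (Y1 is a
   Young diagram), V2 + V2^* s1 s2 and t V2 V1^* contribute 2 d(Y0) and the sum of the d(Y2_(i,j)), and
   V2 V2^* (1 - s1)(1 - s2) contributes P(Y0) plus the sum of the P(Y2_(i,j)), with a minus sign.  Here d(Y)
   counts the boxes of content 0 and P(Y) = sum_a (n_a - n_(a+1))^2, where n_a counts the boxes of content a.
   Since n vanishes far out, P(Y) >= 2 n_0 = 2 d(Y), so K is at least the sum of the d(Y2_(i,j)), which is
   positive. *)

theory Submission
  imports Defs
begin

lemma sum_of_bool_eq_elem: "finite Y \<Longrightarrow> (\<Sum>a\<in>Y. of_bool (a = b)) = (of_bool (b \<in> Y) :: 'a::semiring_1)"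
  by (simp add: of_bool_def)

lemma sum_of_bool_conj_eq:
  "finite Y \<Longrightarrow> (\<Sum>a\<in>Y. of_bool (P \<and> a = b)) = (of_bool (P \<and> b \<in> Y) :: 'a::semiring_1)"
  by (cases P) (simp_all add: of_bool_def)

lemma sum_Sigma_eq: "finite A \<Longrightarrow> \<forall>x\<in>A. finite (B x) \<Longrightarrow> (\<Sum>u\<in>Sigma A B. h u) = (\<Sum>x\<in>A. \<Sum>y\<in>B x. h (x, y))"
  by (simp add: sum.Sigma)

lemma sum_Sigma_same_fst:
  assumes "finite A" "\<forall>x\<in>A. finite (B x)"
  shows "(\<Sum>u\<in>Sigma A B. \<Sum>u'\<in>Sigma A B. of_bool (fst u = fst u') * f (snd u) (snd u'))
    = (\<Sum>x\<in>A. \<Sum>y\<in>B x. \<Sum>y'\<in>B x. f y y' :: 'c::comm_ring_1)"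
proof -
  have inner: "(\<Sum>u'\<in>Sigma A B. of_bool (x = fst u') * g (snd u')) = (\<Sum>y'\<in>B x. g y')"
    if "x \<in> A" for x and g :: "'b \<Rightarrow> 'c"
  proof -
    have "(\<Sum>u'\<in>Sigma A B. of_bool (x = fst u') * g (snd u'))
        = (\<Sum>x'\<in>A. \<Sum>y'\<in>B x'. of_bool (x = x') * g y')"
      using assms by (simp only: sum_Sigma_eq fst_conv snd_conv)
    also have "\<dots> = (\<Sum>x'\<in>A. if x = x' then (\<Sum>y'\<in>B x'. g y') else 0)"
      by (intro sum.cong refl) simp
    also have "\<dots> = (\<Sum>y'\<in>B x. g y')"
      using assms(1) that by simp
    finally show ?thesis .
  qed
  have "(\<Sum>u\<in>Sigma A B. \<Sum>u'\<in>Sigma A B. of_bool (fst u = fst u') * f (snd u) (snd u'))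
      = (\<Sum>u\<in>Sigma A B. \<Sum>y'\<in>B (fst u). f (snd u) y')"
    by (intro sum.cong refl inner) auto
  also have "\<dots> = (\<Sum>x\<in>A. \<Sum>y\<in>B x. \<Sum>y'\<in>B x. f y y')"
    using assms by (simp only: sum_Sigma_eq fst_conv snd_conv)
  finally show ?thesis .
qed

section \<open>Laurent polynomials given by finite families of monomials\<close>

lemma lp_supp_lp_sum: "lp_supp (lp_sum A f) \<subseteq> f ` A"
  unfolding lp_supp_def lp_sum_def by (force simp: card_eq_0_iff)

lemma finite_lp_supp_lp_sum [simp]: "finite A \<Longrightarrow> finite (lp_supp (lp_sum A f))"
  by (rule finite_subset[OF lp_supp_lp_sum]) simp

lemma lp_sum_apply: "finite A \<Longrightarrow> lp_sum A f m = (\<Sum>x\<in>A. of_bool (f x = m))"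
  by (simp add: lp_sum_def Int_def)

lemma lp_dual_lp_sum: "lp_dual (lp_sum A f) = lp_sum A (\<lambda>x. - f x)"
proof -
  have "\<And>x m. (f x = - m) = (- f x = m)"
    by (rule trans[OF equation_minus_iff eq_commute])
  then show ?thesis
    unfolding lp_dual_def lp_sum_def by (simp only:)
qed

lemma lp_shift_lp_sum: "lp_shift c (lp_sum A f) = lp_sum A (\<lambda>x. f x + c)"
  unfolding lp_shift_def lp_sum_def by (simp add: eq_diff_eq)

lemma lp_add_lp_sum:
  assumes "finite A" "finite B"
  shows "lp_add (lp_sum A f) (lp_sum B g) = lp_sum (A <+> B) (case_sum f g)"
  using assms by (simp add: fun_eq_iff lp_add_def lp_sum_apply sum.Plus comp_def del: sum_of_bool_eq)

lemma lp_mul_eq_sum: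
  assumes "finite F" "lp_supp p \<subseteq> F"
  shows "lp_mul p q m = (\<Sum>a\<in>F. p a * q (m - a))"
  unfolding lp_mul_def
  by (rule sum.mono_neutral_left) (use assms in \<open>auto simp: lp_supp_def\<close>)

lemma lp_mul_lp_sum_left:
  assumes "finite A"
  shows "lp_mul (lp_sum A f) q m = (\<Sum>x\<in>A. q (m - f x))"
proof -
  have "lp_mul (lp_sum A f) q m = (\<Sum>a\<in>f ` A. (\<Sum>x\<in>A. of_bool (f x = a)) * q (m - a))"
    using assms
    by (simp add: lp_mul_eq_sum[OF finite_imageI lp_supp_lp_sum] lp_sum_apply del: sum_of_bool_eq)
  also have "\<dots> = (\<Sum>x\<in>A. \<Sum>a\<in>f ` A. of_bool (f x = a) * q (m - a))"
    unfolding sum_distrib_right by (rule sum.swap)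
  also have "\<dots> = (\<Sum>x\<in>A. q (m - f x))"
  proof (intro sum.cong refl)
    fix x assume "x \<in> A"
    have "(\<Sum>a\<in>f ` A. of_bool (f x = a) * q (m - a)) = (\<Sum>a\<in>f ` A. if f x = a then q (m - f x) else 0)"
      by (intro sum.cong refl) auto
    then show "(\<Sum>a\<in>f ` A. of_bool (f x = a) * q (m - a)) = q (m - f x)"
      using assms \<open>x \<in> A\<close> by simp
  qed
  finally show ?thesis .
qed

lemma lp_mul_lp_sum:
  assumes "finite A" "finite B"
  shows "lp_mul (lp_sum A f) (lp_sum B g) = lp_sum (A \<times> B) (\<lambda>(x, y). f x + g y)"
proof
  fix m
  have "\<And>x y. (g y = m - f x) = (f x + g y = m)"
    by (auto simp: algebra_simps)
  then show "lp_mul (lp_sum A f) (lp_sum B g) m = lp_sum (A \<times> B) (\<lambda>(x, y). f x + g y) m"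
    using assms
    by (simp add: lp_mul_lp_sum_left lp_sum_apply sum.cartesian_product split_def del: sum_of_bool_eq)
qed

lemma lp_mul_one_minus_mono: "lp_mul (lp_sub (lp_mono 0) (lp_mono x)) q m = q m - q (m - x)"
proof -
  have "lp_supp (lp_sub (lp_mono 0) (lp_mono x)) \<subseteq> {0, x}"
    by (auto simp: lp_supp_def lp_sub_def lp_mono_def)
  from lp_mul_eq_sum[OF _ this] have "lp_mul (lp_sub (lp_mono 0) (lp_mono x)) q m
      = (\<Sum>a\<in>{0, x}. (lp_mono 0 a - lp_mono x a) * q (m - a))"
    by (simp add: lp_sub_def)
  also have "\<dots> = q m - q (m - x)"
    by (cases "x = 0") (simp_all add: lp_mono_def)
  finally show ?thesis .
qed

lemma lp_mono_apply: "lp_mono c m = of_bool (m = c)"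
  by (simp add: lp_mono_def)

lemma one_minus_sq_apply:
  "one_minus_sq x y m = of_bool (m = 0) - of_bool (m = y) - of_bool (m = x) + of_bool (m = x + y)"
proof -
  have "one_minus_sq x y m = lp_sub (lp_mono 0) (lp_mono y) m - lp_sub (lp_mono 0) (lp_mono y) (m - x)"
    unfolding one_minus_sq_def by (rule lp_mul_one_minus_mono)
  moreover have "(m - x = 0) = (m = x)" "(m - x = y) = (m = x + y)"
    by (auto simp: algebra_simps)
  ultimately show ?thesis
    by (simp add: lp_sub_def lp_mono_apply)
qed

lemma lp_sum_eq_sum_lp_mono: "finite A \<Longrightarrow> lp_sum A f = (\<lambda>m. \<Sum>x\<in>A. lp_mono (f x) m)"
  by (simp add: fun_eq_iff lp_sum_apply lp_mono_apply eq_commute del: sum_of_bool_eq)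

lemma lp_mul_lp_sum_left_eq_sum_lp_shift:
  "finite A \<Longrightarrow> lp_mul (lp_sum A f) q = (\<lambda>m. \<Sum>x\<in>A. lp_shift (f x) q m)"
  by (simp add: fun_eq_iff lp_mul_lp_sum_left lp_shift_def)

lemma lp_shift_one_minus_sq:
  "lp_shift h (one_minus_sq x y)
     = (\<lambda>m. lp_mono h m - lp_mono (y + h) m - lp_mono (x + h) m + lp_mono (x + y + h) m)"
  by (rule ext) (simp only: lp_shift_def one_minus_sq_apply lp_mono_apply diff_eq_eq add_0)

lemma lp_supp_plus: "lp_supp (\<lambda>m. p m + q m) \<subseteq> lp_supp p \<union> lp_supp q"
  by (auto simp: lp_supp_def)

lemma lp_supp_minus: "lp_supp (\<lambda>m. p m - q m) \<subseteq> lp_supp p \<union> lp_supp q"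
  by (auto simp: lp_supp_def)

lemma lp_supp_sum: "lp_supp (\<lambda>m. \<Sum>z\<in>Z. p z m) \<subseteq> (\<Union>z\<in>Z. lp_supp (p z))"
  by (auto simp: lp_supp_def intro: sum.neutral)

lemma lp_supp_lp_mono: "lp_supp (lp_mono c) = {c}"
  by (auto simp: lp_supp_def lp_mono_def)

lemma lp_supp_lp_dual: "lp_supp (lp_dual p) = uminus -` lp_supp p"
  by (simp add: lp_supp_def lp_dual_def vimage_def)

lemma lp_supp_lp_shift: "lp_supp (lp_shift c p) = (\<lambda>m. m - c) -` lp_supp p"
  by (simp add: lp_supp_def lp_shift_def vimage_def)

lemma lp_supp_lp_mul: "lp_supp (lp_mul p q) \<subseteq> (\<lambda>(a, b). a + b) ` (lp_supp p \<times> lp_supp q)"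
proof
  fix m assume "m \<in> lp_supp (lp_mul p q)"
  then have "lp_mul p q m \<noteq> 0"
    by (simp add: lp_supp_def)
  then obtain a where "a \<in> lp_supp p" "p a * q (m - a) \<noteq> 0"
    unfolding lp_mul_def by (rule sum.not_neutral_contains_not_neutral)
  then have "(a, m - a) \<in> lp_supp p \<times> lp_supp q"
    by (simp add: lp_supp_def)
  moreover have "m = (\<lambda>(a, b). a + b) (a, m - a)"
    by simp
  ultimately show "m \<in> (\<lambda>(a, b). a + b) ` (lp_supp p \<times> lp_supp q)"
    by (rule rev_image_eqI)
qed

lemma finite_lp_supp_plus [simp]:
  "finite (lp_supp p) \<Longrightarrow> finite (lp_supp q) \<Longrightarrow> finite (lp_supp (\<lambda>m. p m + q m))"
  by (rule finite_subset[OF lp_supp_plus]) simp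

lemma finite_lp_supp_minus [simp]:
  "finite (lp_supp p) \<Longrightarrow> finite (lp_supp q) \<Longrightarrow> finite (lp_supp (\<lambda>m. p m - q m))"
  by (rule finite_subset[OF lp_supp_minus]) simp

lemma finite_lp_supp_lp_dual [simp]: "finite (lp_supp p) \<Longrightarrow> finite (lp_supp (lp_dual p))"
  unfolding lp_supp_lp_dual by (auto intro!: finite_vimageI injI)

lemma finite_lp_supp_lp_shift [simp]: "finite (lp_supp p) \<Longrightarrow> finite (lp_supp (lp_shift c p))"
  unfolding lp_supp_lp_shift by (auto intro!: finite_vimageI injI)

lemma finite_lp_supp_lp_mul [simp]:
  "finite (lp_supp p) \<Longrightarrow> finite (lp_supp q) \<Longrightarrow> finite (lp_supp (lp_mul p q))"
  by (rule finite_subset[OF lp_supp_lp_mul]) simp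

lemma finite_lp_supp_lp_mono [simp]: "finite (lp_supp (lp_mono c))"
  by (simp add: lp_supp_lp_mono)

lemma finite_lp_supp_one_minus_sq [simp]: "finite (lp_supp (one_minus_sq x y))"
  unfolding one_minus_sq_def lp_sub_def by simp

(* For W the diagonal monomials and p = T^vir, this is minus the order of vanishing of the contribution
   at s1 s2 = 1. *)
definition lp_mass :: "mono set \<Rightarrow> lpoly \<Rightarrow> int" where
  "lp_mass W p = (\<Sum>w\<in>lp_supp p \<inter> W. p w)"

lemma lp_mass_eq_sum:
  assumes "finite F" "lp_supp p \<subseteq> F"
  shows "lp_mass W p = (\<Sum>w\<in>F \<inter> W. p w)"
  unfolding lp_mass_def
  by (rule sum.mono_neutral_left) (use assms in \<open>auto simp: lp_supp_def\<close>)

lemma lp_mass_sum: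
  assumes "finite Z" "\<And>z. z \<in> Z \<Longrightarrow> finite (lp_supp (p z))"
  shows "lp_mass W (\<lambda>m. \<Sum>z\<in>Z. p z m) = (\<Sum>z\<in>Z. lp_mass W (p z))"
proof -
  define F where "F = (\<Union>z\<in>Z. lp_supp (p z))"
  have F: "finite F" "\<And>z. z \<in> Z \<Longrightarrow> lp_supp (p z) \<subseteq> F"
    using assms by (auto simp: F_def)
  have "lp_mass W (\<lambda>m. \<Sum>z\<in>Z. p z m) = (\<Sum>w\<in>F \<inter> W. \<Sum>z\<in>Z. p z w)"
    using F(1) lp_supp_sum unfolding F_def by (rule lp_mass_eq_sum)
  also have "\<dots> = (\<Sum>z\<in>Z. \<Sum>w\<in>F \<inter> W. p z w)"
    by (rule sum.swap)
  also have "\<dots> = (\<Sum>z\<in>Z. lp_mass W (p z))"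
    using F by (simp add: lp_mass_eq_sum)
  finally show ?thesis .
qed

lemma lp_mass_plus:
  assumes "finite (lp_supp p)" "finite (lp_supp q)"
  shows "lp_mass W (\<lambda>m. p m + q m) = lp_mass W p + lp_mass W q"
  using lp_mass_sum[of "{True, False}" "\<lambda>b. if b then p else q" W] assms by simp

lemma lp_mass_minus:
  assumes "finite (lp_supp p)" "finite (lp_supp q)"
  shows "lp_mass W (\<lambda>m. p m - q m) = lp_mass W p - lp_mass W q"
proof -
  let ?F = "lp_supp p \<union> lp_supp q"
  have "lp_mass W (\<lambda>m. p m - q m) = (\<Sum>w\<in>?F \<inter> W. p w - q w)"
    using assms lp_supp_minus by (rule lp_mass_eq_sum[OF finite_UnI])
  also have "\<dots> = lp_mass W p - lp_mass W q"
    using assms by (simp add: sum_subtractf lp_mass_eq_sum[of ?F])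
  finally show ?thesis .
qed

lemma lp_mass_lp_mono: "lp_mass W (lp_mono c) = of_bool (c \<in> W)"
  unfolding lp_mass_def lp_supp_lp_mono by (simp add: lp_mono_def)

lemma lp_mass_lp_sum: "finite A \<Longrightarrow> lp_mass W (lp_sum A f) = (\<Sum>x\<in>A. of_bool (f x \<in> W))"
  by (simp add: lp_sum_eq_sum_lp_mono lp_mass_sum lp_mass_lp_mono del: sum_of_bool_eq)

lemma lp_mass_lp_mul_lp_sum:
  "finite A \<Longrightarrow> finite (lp_supp q) \<Longrightarrow> lp_mass W (lp_mul (lp_sum A f) q) = (\<Sum>x\<in>A. lp_mass W (lp_shift (f x) q))"
  by (simp add: lp_mul_lp_sum_left_eq_sum_lp_shift lp_mass_sum)

lemma lp_mass_shift_one_minus_sq: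
  "lp_mass W (lp_shift h (one_minus_sq x y))
     = of_bool (h \<in> W) - of_bool (y + h \<in> W) - of_bool (x + h \<in> W) + of_bool (x + y + h \<in> W)"
  by (simp add: lp_shift_one_minus_sq lp_mass_plus lp_mass_minus lp_mass_lp_mono)

lemma finite_lp_supp_Tvir:
  "finite (lp_supp (V1_of p)) \<Longrightarrow> finite (lp_supp (V2_of p)) \<Longrightarrow> finite (lp_supp (Tvir p))"
  by (simp add: Tvir_def Let_def)

lemma lp_mass_Tvir:
  assumes "finite A" "finite B" "V1_of p = lp_sum A f" "V2_of p = lp_sum B g"
  shows "lp_mass W (Tvir p) =
      (\<Sum>a\<in>A. of_bool (f a \<in> W)) + (\<Sum>a\<in>A. of_bool (m_r1 + m_r2 - f a \<in> W))
    - (\<Sum>a\<in>A. \<Sum>a'\<in>A. lp_mass W (lp_shift (f a - f a') (one_minus_sq m_r1 m_r2)))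
    + (\<Sum>b\<in>B. of_bool (g b \<in> W)) + (\<Sum>b\<in>B. of_bool (m_s1 + m_s2 - g b \<in> W))
    - (\<Sum>b\<in>B. \<Sum>b'\<in>B. lp_mass W (lp_shift (g b - g b') (one_minus_sq m_s1 m_s2)))
    + (\<Sum>b\<in>B. \<Sum>a\<in>A. of_bool (m_t + g b - f a \<in> W))"
proof -
  have dual: "lp_mass W (lp_shift c (lp_dual (lp_sum C h))) = (\<Sum>x\<in>C. of_bool (c - h x \<in> W))"
    if "finite C" for C and h :: "'c \<Rightarrow> mono" and c
    using that by (simp add: lp_dual_lp_sum lp_shift_lp_sum lp_mass_lp_sum add.commute del: sum_of_bool_eq)
  have pairs: "lp_mass W (lp_mul (lp_mul (lp_sum C h) (lp_dual (lp_sum C h))) (one_minus_sq x y))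
      = (\<Sum>c\<in>C. \<Sum>c'\<in>C. lp_mass W (lp_shift (h c - h c') (one_minus_sq x y)))"
    if "finite C" for C and h :: "'c \<Rightarrow> mono" and x y
    using that
    by (simp add: lp_dual_lp_sum lp_mul_lp_sum lp_mass_lp_mul_lp_sum sum.cartesian_product split_def)
  have cross: "lp_mass W (lp_shift m_t (lp_mul (lp_sum B g) (lp_dual (lp_sum A f))))
      = (\<Sum>b\<in>B. \<Sum>a\<in>A. of_bool (m_t + g b - f a \<in> W))"
    using assms(1,2)
    by (simp add: lp_dual_lp_sum lp_mul_lp_sum lp_shift_lp_sum lp_mass_lp_sum sum.cartesian_product
        split_def diff_add_eq add.commute del: sum_of_bool_eq)
  show ?thesis
    unfolding Tvir_def Let_def assms(3,4)
    using assms(1,2)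
    by (simp add: lp_mass_plus lp_mass_minus lp_mass_lp_sum dual pairs cross del: sum_of_bool_eq)
qed

section \<open>Counting by levels\<close>

lemma abs_le_power2_int: "\<bar>x\<bar> \<le> (x::int)\<^sup>2"
proof (cases "x = 0")
  case False
  then have "\<bar>x\<bar> * 1 \<le> \<bar>x\<bar> * \<bar>x\<bar>"
    by (intro mult_left_mono) auto
  then show ?thesis
    by (simp add: power2_eq_square)
qed simp

lemma two_abs_le_sum_power2_diff:
  fixes n :: "nat \<Rightarrow> int"
  assumes "n 0 = 0" "n N = 0" "L \<le> N"
  shows "2 * \<bar>n L\<bar> \<le> (\<Sum>a<N. (n a - n (Suc a))\<^sup>2)"
proof -
  let ?d = "\<lambda>a. n a - n (Suc a)"
  have split: "(\<Sum>a<N. h a) = (\<Sum>a<L. h a) + (\<Sum>a\<in>{L..<N}. h a)" for h :: "nat \<Rightarrow> int"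
    using assms(3) by (simp add: lessThan_atLeast0 sum.atLeastLessThan_concat)
  have "\<bar>n L\<bar> = \<bar>\<Sum>a<L. ?d a\<bar>"
    using assms(1) by (simp add: sum_lessThan_telescope')
  also have "\<dots> \<le> (\<Sum>a<L. \<bar>?d a\<bar>)"
    by (rule sum_abs)
  finally have left: "\<bar>n L\<bar> \<le> (\<Sum>a<L. \<bar>?d a\<bar>)" .
  have "\<bar>n L\<bar> = \<bar>\<Sum>a\<in>{L..<N}. ?d a\<bar>"
    using split[of ?d] assms(1,2) by (simp add: sum_lessThan_telescope')
  also have "\<dots> \<le> (\<Sum>a\<in>{L..<N}. \<bar>?d a\<bar>)"
    by (rule sum_abs)
  finally have right: "\<bar>n L\<bar> \<le> (\<Sum>a\<in>{L..<N}. \<bar>?d a\<bar>)" .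
  have "(\<Sum>a<N. \<bar>?d a\<bar>) \<le> (\<Sum>a<N. (?d a)\<^sup>2)"
    by (intro sum_mono abs_le_power2_int)
  then show ?thesis
    using left right split[of "\<lambda>a. \<bar>?d a\<bar>"] by linarith
qed

lemma sum_power2_diff_eq:
  fixes n :: "nat \<Rightarrow> 'a::comm_ring_1"
  assumes "n 0 = 0" "n N = 0"
  shows "(\<Sum>a<N. (n a - n (Suc a))\<^sup>2) = 2 * (\<Sum>a<N. n a * n a) - 2 * (\<Sum>a<N. n a * n (Suc a))"
proof -
  have "(\<Sum>a<N. n (Suc a) * n (Suc a)) = (\<Sum>a<N. n a * n a)"
    using sum_lessThan_telescope[of "\<lambda>a. n a * n a" N] assms by (simp add: sum_subtractf)
  then show ?thesis
    by (simp add: power2_eq_square algebra_simps sum.distrib sum_subtractf sum_distrib_left)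
qed

lemma sum_group_by_index:
  fixes k :: "'a \<Rightarrow> nat" and g :: "nat \<Rightarrow> int"
  assumes "finite Y" "k ` Y \<subseteq> {..<N}"
  shows "(\<Sum>p\<in>Y. g (k p)) = (\<Sum>a<N. int (card {p\<in>Y. k p = a}) * g a)"
proof -
  have "(\<Sum>p\<in>Y. g (k p)) = (\<Sum>a<N. \<Sum>p\<in>{p\<in>Y. k p = a}. g (k p))"
    using sum.group[OF assms(1) _ assms(2), of "\<lambda>p. g (k p)"] by simp
  also have "\<dots> = (\<Sum>a<N. int (card {p\<in>Y. k p = a}) * g a)"
    by (intro sum.cong refl) simp
  finally show ?thesis .
qed

(* The diagonal mass of V V^* (1 - s1)(1 - s2) for the character V of a set of boxes with contents c. *)
definition level_pairing :: "('a \<Rightarrow> int) \<Rightarrow> 'a set \<Rightarrow> int" where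
  "level_pairing c Y = (\<Sum>p\<in>Y. \<Sum>p'\<in>Y.
     2 * of_bool (c p = c p') - of_bool (c p = c p' + 1) - of_bool (c p' = c p + 1))"

lemma level_pairing_eq:
  assumes "finite Y"
  shows "level_pairing c Y
     = 2 * (\<Sum>p\<in>Y. int (card {p'\<in>Y. c p' = c p})) - 2 * (\<Sum>p\<in>Y. int (card {p'\<in>Y. c p' = c p + 1}))"
proof -
  have count: "(\<Sum>p'\<in>Y. of_bool (c p' = v)) = int (card {p'\<in>Y. c p' = v})" for v
    using assms by (simp add: Int_def)
  have "level_pairing c Y = 2 * (\<Sum>p\<in>Y. \<Sum>p'\<in>Y. of_bool (c p = c p'))
      - (\<Sum>p\<in>Y. \<Sum>p'\<in>Y. of_bool (c p = c p' + 1)) - (\<Sum>p\<in>Y. \<Sum>p'\<in>Y. of_bool (c p' = c p + 1))"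
    unfolding level_pairing_def by (simp add: sum_subtractf sum_distrib_left del: sum_of_bool_eq)
  also have "(\<Sum>p\<in>Y. \<Sum>p'\<in>Y. of_bool (c p = c p')) = (\<Sum>p\<in>Y. \<Sum>p'\<in>Y. of_bool (c p' = c p) :: int)"
    by (simp only: eq_commute)
  also have "(\<Sum>p\<in>Y. \<Sum>p'\<in>Y. of_bool (c p = c p' + 1)) = (\<Sum>p\<in>Y. \<Sum>p'\<in>Y. of_bool (c p' = c p + 1) :: int)"
    by (rule sum.swap)
  finally show ?thesis
    unfolding count by simp
qed

lemma level_pairing_eq_sum_power2_diff:
  fixes c :: "'a \<Rightarrow> int"
  assumes "finite Y" "\<forall>p\<in>Y. lo < c p \<and> c p < lo + int N"
  defines "n \<equiv> \<lambda>a. int (card {p\<in>Y. c p = lo + int a})"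
  shows "level_pairing c Y = (\<Sum>a<N. (n a - n (Suc a))\<^sup>2)"
proof -
  define k where "k p = nat (c p - lo)" for p
  have k_iff: "k p = a \<longleftrightarrow> c p = lo + int a" if "p \<in> Y" for p a
    using assms(2) that by (auto simp: k_def)
  have k_range: "k ` Y \<subseteq> {..<N}"
    using assms(2) by (force simp: k_def)
  have count_k: "int (card {p\<in>Y. k p = a}) = n a" for a
    unfolding n_def using k_iff by (metis (lifting))
  have group: "(\<Sum>p\<in>Y. g (c p)) = (\<Sum>a<N. n a * g (lo + int a))" for g
  proof -
    have "(\<Sum>p\<in>Y. g (c p)) = (\<Sum>p\<in>Y. g (lo + int (k p)))"
      using k_iff by (intro sum.cong refl) metis
    then show ?thesis
      using sum_group_by_index[OF assms(1) k_range, of "\<lambda>a. g (lo + int a)"] by (simp add: count_k)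
  qed
  have "{p\<in>Y. c p = lo + int 0} = {}" "{p\<in>Y. c p = lo + int N} = {}"
    using assms(2) by fastforce+
  then have "n 0 = 0" "n N = 0"
    unfolding n_def by (simp_all only: card.empty of_nat_0)
  then have "(\<Sum>a<N. (n a - n (Suc a))\<^sup>2) = 2 * (\<Sum>a<N. n a * n a) - 2 * (\<Sum>a<N. n a * n (Suc a))"
    by (rule sum_power2_diff_eq)
  also have "\<dots> = level_pairing c Y"
    using group[of "\<lambda>v. int (card {p'\<in>Y. c p' = v})"] group[of "\<lambda>v. int (card {p'\<in>Y. c p' = v + 1})"]
    by (simp add: level_pairing_eq[OF assms(1)] n_def algebra_simps)
  finally show ?thesis
    by simp
qed

lemma two_card_level_zero_le_level_pairing:
  fixes c :: "'a \<Rightarrow> int"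
  assumes "finite Y"
  shows "2 * int (card {p\<in>Y. c p = 0}) \<le> level_pairing c Y"
proof -
  define B where "B = (\<Sum>p\<in>Y. \<bar>c p\<bar>)"
  have bound: "\<bar>c p\<bar> \<le> B" if "p \<in> Y" for p
    unfolding B_def using assms that by (intro member_le_sum) auto
  have "0 \<le> B"
    unfolding B_def by (simp add: sum_nonneg)
  define n where "n a = int (card {p\<in>Y. c p = - B - 1 + int a})" for a
  have range: "\<forall>p\<in>Y. - B - 1 < c p \<and> c p < - B - 1 + int (nat (2 * B + 2))"
    using bound \<open>0 \<le> B\<close> by force
  have "{p\<in>Y. c p = - B - 1 + int 0} = {}" "{p\<in>Y. c p = - B - 1 + int (nat (2 * B + 2))} = {}"
    using range by fastforce+
  then have "n 0 = 0" "n (nat (2 * B + 2)) = 0"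
    unfolding n_def by (simp_all only: card.empty of_nat_0)
  then have "2 * \<bar>n (nat (B + 1))\<bar> \<le> (\<Sum>a<nat (2 * B + 2). (n a - n (Suc a))\<^sup>2)"
    by (rule two_abs_le_sum_power2_diff) (use \<open>0 \<le> B\<close> in simp)
  also have "\<dots> = level_pairing c Y"
    unfolding n_def using range by (rule level_pairing_eq_sum_power2_diff[OF assms, symmetric])
  also have "n (nat (B + 1)) = int (card {p\<in>Y. c p = 0})"
    using \<open>0 \<le> B\<close> by (simp add: n_def)
  finally show ?thesis
    by simp
qed

lemma young_origin: "young Y \<Longrightarrow> Y \<noteq> {} \<Longrightarrow> (0, 0) \<in> Y"
  unfolding young_def by fastforce

lemma young_subset_square:
  assumes "young Y" "card Y \<le> n"
  shows "Y \<subseteq> {..<n} \<times> {..<n}"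
proof
  fix p assume "p \<in> Y"
  then obtain i j where p: "p = (i, j)" "(i, j) \<in> Y"
    by (cases p) auto
  have "{..i} \<times> {..j} \<subseteq> Y"
    using assms(1) p(2) unfolding young_def by blast
  then have "card ({..i} \<times> {..j}) \<le> card Y"
    using assms(1) by (intro card_mono) (auto simp: young_def)
  then have "Suc i * Suc j \<le> n"
    using assms(2) by (simp add: card_cartesian_product)
  moreover have "Suc i \<le> Suc i * Suc j" "Suc j \<le> Suc i * Suc j"
    by simp_all
  ultimately show "p \<in> {..<n} \<times> {..<n}"
    unfolding p by simp
qed

lemma finite_fixed_points: "finite (fixed_points M1 M2)"
proof -
  let ?B1 = "{..<M1} \<times> {..<M1}" and ?B2 = "{..<M2} \<times> {..<M2}"
  let ?F = "{f. \<forall>x. (x \<in> ?B1 \<longrightarrow> f x \<in> Pow ?B2) \<and> (x \<notin> ?B1 \<longrightarrow> f x = {})}"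
  have "fixed_points M1 M2 \<subseteq> Pow ?B1 \<times> Pow ?B2 \<times> ?F"
  proof
    fix p assume "p \<in> fixed_points M1 M2"
    moreover obtain Y1 Y0 Y2 where p: "p = (Y1, Y0, Y2)"
      by (cases p)
    ultimately have Y: "young Y1" "card Y1 = M1" "young Y0" "\<forall>x\<in>Y1. young (Y2 x)" "\<forall>x. x \<notin> Y1 \<longrightarrow> Y2 x = {}"
      "card Y0 + (\<Sum>x\<in>Y1. card (Y2 x)) = M2"
      by (auto simp: fixed_points_def)
    have Y1: "Y1 \<subseteq> ?B1"
      using Y by (simp add: young_subset_square)
    have Y2: "Y2 x \<subseteq> ?B2" if "x \<in> Y1" for x
    proof -
      have "card (Y2 x) \<le> (\<Sum>x\<in>Y1. card (Y2 x))"
        using Y(1) that by (intro member_le_sum) (auto simp: young_def)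
      then show ?thesis
        using Y that by (intro young_subset_square) auto
    qed
    have "Y2 \<in> ?F"
    proof (intro CollectI allI conjI impI)
      fix x assume "x \<in> ?B1"
      show "Y2 x \<in> Pow ?B2"
        using Y2 by (cases "x \<in> Y1") (simp_all add: Y(5))
    next
      fix x assume "x \<notin> ?B1"
      then show "Y2 x = {}"
        using Y1 Y(5) by blast
    qed
    moreover have "Y0 \<subseteq> ?B2"
      using Y by (intro young_subset_square) auto
    ultimately show "p \<in> Pow ?B1 \<times> Pow ?B2 \<times> ?F"
      using Y1 p by simp
  qed
  moreover have "finite (Pow ?B1 \<times> Pow ?B2 \<times> ?F)"
    by (intro finite_cartesian_product finite_Pow_iff[THEN iffD2] finite_set_of_finite_funs) auto
  ultimately show ?thesis
    by (rule finite_subset)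
qed

section \<open>The diagonal mass of the virtual tangent space\<close>

definition diag_monos :: "mono set" where
  "diag_monos = {(0, 0, c, c, 0) | c. True}"

lemma mem_diag_monos [simp]: "(a, b, c, d, e) \<in> diag_monos \<longleftrightarrow> a = 0 \<and> b = 0 \<and> c = d \<and> e = 0"
  by (auto simp: diag_monos_def)

definition r_weight :: "nat \<times> nat \<Rightarrow> mono" where
  "r_weight = (\<lambda>(i, j). (- int i, - int j, 0, 0, 0))"

definition s_weight :: "nat \<times> nat \<Rightarrow> mono" where
  "s_weight = (\<lambda>(k, l). (0, 0, - int k, - int l, 0))"

definition edge_weight :: "(nat \<times> nat) \<times> (nat \<times> nat) \<Rightarrow> mono" where
  "edge_weight = (\<lambda>((i, j), (k, l)). (- int i, - int j, - int k, - int l, - 1))"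

definition box_content :: "nat \<times> nat \<Rightarrow> int" where
  "box_content = (\<lambda>(k, l). int k - int l)"

definition diag_count :: "(nat \<times> nat) set \<Rightarrow> int" where
  "diag_count Y = (\<Sum>p\<in>Y. of_bool (box_content p = 0))"

lemma V1_of_eq: "V1_of (Y1, Y0, Y2) = lp_sum Y1 r_weight"
  by (simp add: V1_of_def r_weight_def)

lemma V2_of_eq:
  "finite Y0 \<Longrightarrow> finite (Sigma Y1 Y2)
    \<Longrightarrow> V2_of (Y1, Y0, Y2) = lp_sum (Y0 <+> Sigma Y1 Y2) (case_sum s_weight edge_weight)"
  by (simp add: V2_of_def lp_add_lp_sum s_weight_def edge_weight_def split_def)

lemma lp_mass_diag_shift_one_minus_sq_s:
  "lp_mass diag_monos (lp_shift (a, b, c, d, e) (one_minus_sq m_s1 m_s2))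
     = of_bool (a = 0 \<and> b = 0 \<and> e = 0) * (2 * of_bool (c = d) - of_bool (c + 1 = d) - of_bool (c = d + 1))"
  by (simp add: lp_mass_shift_one_minus_sq)

lemma lp_mass_diag_r_pair:
  "lp_mass diag_monos (lp_shift (r_weight (i, j) - r_weight a) (one_minus_sq m_r1 m_r2))
     = of_bool (a = (i, j)) - of_bool (0 < j \<and> a = (i, j - 1))
       - of_bool (0 < i \<and> a = (i - 1, j)) + of_bool ((0 < i \<and> 0 < j) \<and> a = (i - 1, j - 1))"
proof (cases a)
  case (Pair i' j')
  have "(1 + (int v - int u) = 0) = (0 < u \<and> v = u - 1)" "(int v - int u = 0) = (v = u)" for u v :: nat
    by arith+
  then show ?thesis
    by (auto simp: Pair lp_mass_shift_one_minus_sq r_weight_def zero_prod_def)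
qed

lemma lp_mass_diag_s_pair:
  "lp_mass diag_monos (lp_shift (s_weight p - s_weight p') (one_minus_sq m_s1 m_s2))
     = 2 * of_bool (box_content p = box_content p') - of_bool (box_content p = box_content p' + 1)
       - of_bool (box_content p' = box_content p + 1)"
proof -
  obtain k l k' l' where "p = (k, l)" "p' = (k', l')"
    by fastforce
  moreover have "(int k' - int k = int l' - int l) = (int k - int l = int k' - int l')"
    "(int k' - int k + 1 = int l' - int l) = (int k - int l = int k' - int l' + 1)"
    "(int k' - int k = int l' - int l + 1) = (int k' - int l' = int k - int l + 1)"
    by linarith+
  ultimately show ?thesis
    by (simp add: lp_mass_diag_shift_one_minus_sq_s s_weight_def box_content_def)
qed

lemma lp_mass_diag_edge_pair:
  "lp_mass diag_monos (lp_shift (edge_weight u - edge_weight u') (one_minus_sq m_s1 m_s2))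
     = of_bool (fst u = fst u') * lp_mass diag_monos (lp_shift (s_weight (snd u) - s_weight (snd u')) (one_minus_sq m_s1 m_s2))"
proof -
  obtain i j k l i' j' k' l' where "u = ((i, j), (k, l))" "u' = ((i', j'), (k', l'))"
    by (metis prod.collapse)
  moreover have "(int i' - int i = 0 \<and> int j' - int j = 0) = ((i, j) = (i', j'))"
    by auto
  ultimately show ?thesis
    by (simp add: lp_mass_diag_shift_one_minus_sq_s edge_weight_def s_weight_def)
qed

lemma s_weight_diag: "s_weight p \<in> diag_monos \<longleftrightarrow> box_content p = 0"
  by (simp add: s_weight_def box_content_def split: prod.splits)

lemma s_weight_dual_diag: "m_s1 + m_s2 - s_weight p \<in> diag_monos \<longleftrightarrow> box_content p = 0"
  by (simp add: s_weight_def box_content_def split: prod.splits)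

lemma edge_weight_not_diag: "edge_weight u \<notin> diag_monos" "m_s1 + m_s2 - edge_weight u \<notin> diag_monos"
  by (simp_all add: edge_weight_def split: prod.splits)

lemma sum_r_weight_diag:
  assumes "finite Y"
  shows "(\<Sum>a\<in>Y. of_bool (r_weight a \<in> diag_monos)) = (of_bool ((0, 0) \<in> Y) :: int)"
proof -
  have "r_weight a \<in> diag_monos \<longleftrightarrow> a = (0, 0)" for a
    by (cases a) (simp add: r_weight_def)
  then show ?thesis
    using assms by (simp add: sum_of_bool_eq_elem del: sum_of_bool_eq)
qed

lemma sum_r_weight_dual_diag: "(\<Sum>a\<in>Y. of_bool (m_r1 + m_r2 - r_weight a \<in> diag_monos)) = (0 :: int)"
  by (rule sum.neutral) (simp add: r_weight_def zero_prod_def split: prod.splits)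

lemma sum_r_pairs_diag_young:
  assumes "young Y"
  shows "(\<Sum>a\<in>Y. \<Sum>a'\<in>Y. lp_mass diag_monos (lp_shift (r_weight a - r_weight a') (one_minus_sq m_r1 m_r2)))
    = of_bool ((0, 0) \<in> Y)"
proof -
  have fin: "finite Y"
    using assms by (simp add: young_def)
  have row: "(\<Sum>a'\<in>Y. lp_mass diag_monos (lp_shift (r_weight a - r_weight a') (one_minus_sq m_r1 m_r2)))
      = of_bool (a = (0, 0))" if "a \<in> Y" for a
  proof (cases a)
    case (Pair i j)
    have closed: "(i', j') \<in> Y" if "i' \<le> i" "j' \<le> j" for i' j'
      using assms \<open>a \<in> Y\<close> that unfolding Pair young_def by blast
    have "(\<Sum>a'\<in>Y. lp_mass diag_monos (lp_shift (r_weight (i, j) - r_weight a') (one_minus_sq m_r1 m_r2)))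
        = of_bool ((i, j) \<in> Y) - of_bool (0 < j \<and> (i, j - 1) \<in> Y)
          - of_bool (0 < i \<and> (i - 1, j) \<in> Y) + of_bool ((0 < i \<and> 0 < j) \<and> (i - 1, j - 1) \<in> Y)"
      using fin
      by (simp only: lp_mass_diag_r_pair sum.distrib sum_subtractf sum_of_bool_conj_eq sum_of_bool_eq_elem)
    also have "\<dots> = of_bool ((i, j) = (0, 0))"
      using closed by (cases i; cases j) auto
    finally show ?thesis
      by (simp add: Pair)
  qed
  have "(\<Sum>a\<in>Y. \<Sum>a'\<in>Y. lp_mass diag_monos (lp_shift (r_weight a - r_weight a') (one_minus_sq m_r1 m_r2)))
      = (\<Sum>a\<in>Y. of_bool (a = (0, 0)))"
    using row by (rule sum.cong[OF refl])
  also have "\<dots> = of_bool ((0, 0) \<in> Y)"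
    using fin by (rule sum_of_bool_eq_elem)
  finally show ?thesis .
qed

lemma sum_V2_weight_diag:
  "finite Y0 \<Longrightarrow> finite S
    \<Longrightarrow> (\<Sum>b\<in>Y0 <+> S. of_bool (case_sum s_weight edge_weight b \<in> diag_monos)) = diag_count Y0"
  by (simp add: sum.Plus diag_count_def s_weight_diag edge_weight_not_diag del: sum_of_bool_eq)

lemma sum_V2_weight_dual_diag:
  "finite Y0 \<Longrightarrow> finite S
    \<Longrightarrow> (\<Sum>b\<in>Y0 <+> S. of_bool (m_s1 + m_s2 - case_sum s_weight edge_weight b \<in> diag_monos)) = diag_count Y0"
  by (simp add: sum.Plus diag_count_def s_weight_dual_diag edge_weight_not_diag del: sum_of_bool_eq add_Pair)

lemma sum_V2_pairs_diag:
  assumes "finite Y0" "finite Y1" "\<forall>x\<in>Y1. finite (Y2 x)"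
  shows "(\<Sum>b\<in>Y0 <+> Sigma Y1 Y2. \<Sum>b'\<in>Y0 <+> Sigma Y1 Y2. lp_mass diag_monos
      (lp_shift (case_sum s_weight edge_weight b - case_sum s_weight edge_weight b') (one_minus_sq m_s1 m_s2)))
    = level_pairing box_content Y0 + (\<Sum>x\<in>Y1. level_pairing box_content (Y2 x))"
proof -
  have mixed: "lp_mass diag_monos (lp_shift (s_weight p - edge_weight u) (one_minus_sq m_s1 m_s2)) = 0"
    "lp_mass diag_monos (lp_shift (edge_weight u - s_weight p) (one_minus_sq m_s1 m_s2)) = 0" for p u
    by (simp_all add: lp_mass_diag_shift_one_minus_sq_s s_weight_def edge_weight_def split: prod.splits)
  have fin: "finite (Sigma Y1 Y2)"
    using assms(2,3) by blast
  let ?m = "\<lambda>p p'. lp_mass diag_monos (lp_shift (s_weight p - s_weight p') (one_minus_sq m_s1 m_s2))"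
  have "(\<Sum>b\<in>Y0 <+> Sigma Y1 Y2. \<Sum>b'\<in>Y0 <+> Sigma Y1 Y2. lp_mass diag_monos
      (lp_shift (case_sum s_weight edge_weight b - case_sum s_weight edge_weight b') (one_minus_sq m_s1 m_s2)))
      = (\<Sum>p\<in>Y0. \<Sum>p'\<in>Y0. ?m p p')
        + (\<Sum>u\<in>Sigma Y1 Y2. \<Sum>u'\<in>Sigma Y1 Y2. of_bool (fst u = fst u') * ?m (snd u) (snd u'))"
    using assms(1) fin by (simp add: sum.Plus mixed lp_mass_diag_edge_pair del: sum_of_bool_mult_eq)
  also have "\<dots> = (\<Sum>p\<in>Y0. \<Sum>p'\<in>Y0. ?m p p') + (\<Sum>x\<in>Y1. \<Sum>p\<in>Y2 x. \<Sum>p'\<in>Y2 x. ?m p p')"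
    by (simp only: sum_Sigma_same_fst[OF assms(2,3), where f = ?m])
  also have "\<dots> = level_pairing box_content Y0 + (\<Sum>x\<in>Y1. level_pairing box_content (Y2 x))"
    by (simp only: level_pairing_def lp_mass_diag_s_pair)
  finally show ?thesis .
qed

lemma sum_cross_weight_diag:
  assumes "finite Y0" "finite Y1" "\<forall>x\<in>Y1. finite (Y2 x)"
  shows "(\<Sum>b\<in>Y0 <+> Sigma Y1 Y2. \<Sum>a\<in>Y1. of_bool (m_t + case_sum s_weight edge_weight b - r_weight a \<in> diag_monos))
    = (\<Sum>x\<in>Y1. diag_count (Y2 x))"
proof -
  have s: "m_t + s_weight p - r_weight a \<notin> diag_monos" for p a
    by (simp add: s_weight_def r_weight_def split: prod.splits)
  have e: "m_t + edge_weight u - r_weight a \<in> diag_monos \<longleftrightarrow> a = fst u \<and> box_content (snd u) = 0" for u a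
    by (auto simp: edge_weight_def r_weight_def box_content_def split: prod.splits)
  have "(\<Sum>b\<in>Y0 <+> Sigma Y1 Y2. \<Sum>a\<in>Y1. of_bool (m_t + case_sum s_weight edge_weight b - r_weight a \<in> diag_monos))
      = (\<Sum>u\<in>Sigma Y1 Y2. \<Sum>a\<in>Y1. of_bool (box_content (snd u) = 0 \<and> a = fst u) :: int)"
    using assms by (simp add: sum.Plus s e conj_commute del: sum_of_bool_eq)
  also have "\<dots> = (\<Sum>u\<in>Sigma Y1 Y2. of_bool (box_content (snd u) = 0))"
    using assms(2) by (intro sum.cong refl) (auto simp: sum_of_bool_conj_eq)
  also have "\<dots> = (\<Sum>x\<in>Y1. diag_count (Y2 x))"
    using assms by (simp add: sum.Sigma split_def diag_count_def del: sum_of_bool_eq)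
  finally show ?thesis .
qed

lemma lp_mass_diag_Tvir:
  assumes "young Y1" "finite Y0" "\<forall>x\<in>Y1. finite (Y2 x)"
  shows "lp_mass diag_monos (Tvir (Y1, Y0, Y2)) = 2 * diag_count Y0 - level_pairing box_content Y0
    + (\<Sum>x\<in>Y1. diag_count (Y2 x) - level_pairing box_content (Y2 x))"
proof -
  have fin: "finite Y1" "finite (Sigma Y1 Y2)" "finite (Y0 <+> Sigma Y1 Y2)"
    using assms by (auto simp: young_def)
  have "lp_mass diag_monos (Tvir (Y1, Y0, Y2)) = of_bool ((0, 0) \<in> Y1) + 0 - of_bool ((0, 0) \<in> Y1)
      + diag_count Y0 + diag_count Y0 - (level_pairing box_content Y0 + (\<Sum>x\<in>Y1. level_pairing box_content (Y2 x)))
      + (\<Sum>x\<in>Y1. diag_count (Y2 x))"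
    by (simp only: lp_mass_Tvir[OF fin(1,3) V1_of_eq V2_of_eq[OF assms(2) fin(2)]]
        sum_r_weight_diag[OF fin(1)] sum_r_weight_dual_diag sum_r_pairs_diag_young[OF assms(1)]
        sum_V2_weight_diag[OF assms(2) fin(2)] sum_V2_weight_dual_diag[OF assms(2) fin(2)]
        sum_V2_pairs_diag[OF assms(2) fin(1) assms(3)] sum_cross_weight_diag[OF assms(2) fin(1) assms(3)])
  then show ?thesis
    by (simp add: sum_subtractf)
qed

lemma two_diag_count_le_level_pairing: "finite Y \<Longrightarrow> 2 * diag_count Y \<le> level_pairing box_content Y"
  using two_card_level_zero_le_level_pairing[of Y box_content] by (simp add: diag_count_def Int_def)

lemma lp_mass_diag_Tvir_neg:
  assumes "(Y1, Y0, Y2) \<in> fixed_points M1 M2 - ring_fixed_points M1 M2"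
  shows "lp_mass diag_monos (Tvir (Y1, Y0, Y2)) < 0"
proof -
  have young: "young Y1" "young Y0" "\<forall>x\<in>Y1. young (Y2 x)" and "\<exists>x\<in>Y1. Y2 x \<noteq> {}"
    using assms by (auto simp: fixed_points_def ring_fixed_points_def)
  then obtain x where x: "x \<in> Y1" "(0, 0) \<in> Y2 x"
    using young_origin by blast
  have fin: "finite Y1" "finite Y0" "\<forall>x\<in>Y1. finite (Y2 x)"
    using young by (auto simp: young_def)
  have "of_bool (box_content (0, 0) = 0) \<le> diag_count (Y2 x)"
    unfolding diag_count_def using x fin by (intro member_le_sum) auto
  then have "1 \<le> diag_count (Y2 x)"
    by (simp add: box_content_def)
  also have "\<dots> \<le> (\<Sum>x\<in>Y1. diag_count (Y2 x))"
    using x(1) fin(1) by (intro member_le_sum) (auto simp: diag_count_def intro: sum_nonneg)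
  finally have "1 \<le> (\<Sum>x\<in>Y1. diag_count (Y2 x))" .
  moreover have "(\<Sum>x\<in>Y1. diag_count (Y2 x) - level_pairing box_content (Y2 x)) \<le> (\<Sum>x\<in>Y1. - diag_count (Y2 x))"
    using fin(3) two_diag_count_le_level_pairing by (intro sum_mono) fastforce
  moreover have "2 * diag_count Y0 \<le> level_pairing box_content Y0"
    using fin(2) by (rule two_diag_count_le_level_pairing)
  ultimately show ?thesis
    using young(1) fin by (simp add: lp_mass_diag_Tvir sum_negf)
qed

lemma finite_lp_supp_Tvir_fixed_point:
  assumes "(Y1, Y0, Y2) \<in> fixed_points M1 M2"
  shows "finite (lp_supp (Tvir (Y1, Y0, Y2)))"
proof -
  have "finite Y1" "finite Y0" "\<forall>x\<in>Y1. finite (Y2 x)"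
    using assms by (auto simp: fixed_points_def young_def)
  then show ?thesis
    by (simp add: finite_lp_supp_Tvir V1_of_eq V2_of_eq)
qed

section \<open>The limit s1 s2 \<rightarrow> 1\<close>

lemma mono_eval_diag:
  "s1 \<noteq> 0 \<Longrightarrow> mono_eval (- (0, 0, c, c, 0)) (r1, r2, s1, q / s1, t) = q powi (- c)"
  by (simp add: power_int_divide_distrib power_int_not_zero)

lemma mono_eval_off_diag_ne_1:
  fixes r1 r2 s1 t :: complex
  assumes "s1 \<noteq> 0"
    and generic: "\<forall>a b c d :: int.
        r1 powi a * r2 powi b * s1 powi c * t powi d = 1 \<longrightarrow> a = 0 \<and> b = 0 \<and> c = 0 \<and> d = 0"
    and "w \<notin> diag_monos"
  shows "mono_eval (- w) (r1, r2, s1, 1 / s1, t) \<noteq> 1"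
proof
  obtain a b c d e where w: "w = (a, b, c, d, e)"
    by (cases w) auto
  have "s1 powi (- c) * (1 / s1) powi (- d) = s1 powi (d - c)"
    using assms(1) by (simp add: power_int_one_over power_int_minus power_int_diff field_simps)
  moreover assume "mono_eval (- w) (r1, r2, s1, 1 / s1, t) = 1"
  ultimately have "r1 powi (- a) * r2 powi (- b) * s1 powi (d - c) * t powi (- e) = 1"
    unfolding w by (simp add: mult.assoc)
  then show False
    using generic \<open>w \<notin> diag_monos\<close> unfolding w by force
qed

lemma tendsto_mono_eval:
  assumes "s1 \<noteq> 0"
  shows "((\<lambda>q. mono_eval w (r1, r2, s1, q / s1, t)) \<longlongrightarrow> mono_eval w (r1, r2, s1, 1 / s1, t)) (at 1)"
proof -
  obtain a b c d e where w: "w = (a, b, c, d, e)"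
    by (cases w) auto
  have "((\<lambda>q. (q / s1) powi d) \<longlongrightarrow> (1 / s1) powi d) (at 1)"
    using assms by (intro tendsto_power_int tendsto_intros) auto
  then show ?thesis
    unfolding w by (auto intro!: tendsto_mult)
qed

lemma tendsto_power_int_difference_quotient:
  "((\<lambda>q::complex. (q powi c - 1) / (q - 1)) \<longlongrightarrow> of_int c) (at 1)"
proof -
  have "((\<lambda>q::complex. q powi c) has_field_derivative of_int c * 1 powi (c - 1) * 1) (at 1)"
    by (rule DERIV_power_int) (auto intro: DERIV_ident)
  then show ?thesis
    by (simp add: has_field_derivative_iff)
qed

lemma tendsto_weight_factor:
  fixes r1 r2 s1 t :: complex
  assumes "s1 \<noteq> 0"
    and generic: "\<forall>a b c d :: int.
        r1 powi a * r2 powi b * s1 powi c * t powi d = 1 \<longrightarrow> a = 0 \<and> b = 0 \<and> c = 0 \<and> d = 0"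
    and "w \<noteq> 0"
  shows "\<exists>L. L \<noteq> 0 \<and> ((\<lambda>q. (1 - mono_eval (- w) (r1, r2, s1, q / s1, t)) / (q - 1) ^ of_bool (w \<in> diag_monos))
           \<longlongrightarrow> L) (at 1)"
proof (cases "w \<in> diag_monos")
  case True
  then obtain c where w: "w = (0, 0, c, c, 0)" and "c \<noteq> 0"
    using \<open>w \<noteq> 0\<close> by (auto simp: diag_monos_def zero_prod_def)
  have "((\<lambda>q::complex. - ((q powi (- c) - 1) / (q - 1))) \<longlongrightarrow> - of_int (- c)) (at 1)"
    by (intro tendsto_minus tendsto_power_int_difference_quotient)
  then have "((\<lambda>q. (1 - mono_eval (- w) (r1, r2, s1, q / s1, t)) / (q - 1)) \<longlongrightarrow> of_int c) (at 1)"
    unfolding w mono_eval_diag[OF assms(1)] by (simp add: minus_divide_left)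
  then show ?thesis
    using True \<open>c \<noteq> 0\<close> by (intro exI[of _ "of_int c"]) simp
next
  case False
  have "((\<lambda>q. 1 - mono_eval (- w) (r1, r2, s1, q / s1, t)) \<longlongrightarrow> 1 - mono_eval (- w) (r1, r2, s1, 1 / s1, t)) (at 1)"
    by (intro tendsto_diff tendsto_const tendsto_mono_eval assms(1))
  then show ?thesis
    using mono_eval_off_diag_ne_1[OF assms(1) generic False] False
    by (intro exI[of _ "1 - mono_eval (- w) (r1, r2, s1, 1 / s1, t)"]) simp
qed

lemma prod_power_int_eq_power_int_sum:
  fixes x :: "'a::field"
  assumes "x \<noteq> 0" "finite A"
  shows "(\<Prod>a\<in>A. x powi f a) = x powi (\<Sum>a\<in>A. f a)"
  using assms(2) by (induction A rule: finite_induct) (simp_all add: power_int_add assms(1))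

lemma contrib_of_factor:
  fixes q :: complex
  assumes "q \<noteq> 1" "finite (lp_supp T)"
  shows "contrib_of T (r1, r2, s1, q / s1, t) = (q - 1) powi (- lp_mass diag_monos T)
    * (\<Prod>w\<in>lp_supp T. ((1 - mono_eval (- w) (r1, r2, s1, q / s1, t)) / (q - 1) ^ of_bool (w \<in> diag_monos))
        powi (- T w))"
proof -
  let ?E = "\<lambda>w. mono_eval (- w) (r1, r2, s1, q / s1, t)"
  have factor: "(1 - ?E w) powi (- T w) = (q - 1) powi (- (of_bool (w \<in> diag_monos) * T w))
      * ((1 - ?E w) / (q - 1) ^ of_bool (w \<in> diag_monos)) powi (- T w)" for w
    using assms(1) by (cases "w \<in> diag_monos") (simp_all add: power_int_mult_distrib[symmetric])
  have "(\<Prod>w\<in>lp_supp T. (q - 1) powi (- (of_bool (w \<in> diag_monos) * T w)))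
      = (q - 1) powi (- (\<Sum>w\<in>lp_supp T. of_bool (w \<in> diag_monos) * T w))"
    using assms by (simp add: prod_power_int_eq_power_int_sum sum_negf del: sum_of_bool_mult_eq)
  also have "(\<Sum>w\<in>lp_supp T. of_bool (w \<in> diag_monos) * T w) = lp_mass diag_monos T"
    unfolding lp_mass_def using assms(2) by (simp only: sum_of_bool_mult_eq Collect_mem_eq)
  finally show ?thesis
    unfolding contrib_of_def factor prod.distrib by simp
qed

lemma tendsto_contrib_of_zero:
  fixes r1 r2 s1 t :: complex
  assumes "s1 \<noteq> 0"
    and generic: "\<forall>a b c d :: int.
        r1 powi a * r2 powi b * s1 powi c * t powi d = 1 \<longrightarrow> a = 0 \<and> b = 0 \<and> c = 0 \<and> d = 0"
    and "finite (lp_supp T)" "lp_mass diag_monos T < 0"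
  shows "((\<lambda>q. contrib_of T (r1, r2, s1, q / s1, t)) \<longlongrightarrow> 0) (at 1)"
proof (cases "0 \<in> lp_supp T")
  case True
  \<comment> \<open>a trivial weight gives a factor \<open>0 powi (- T 0)\<close> with \<open>T 0 \<noteq> 0\<close>, which is 0 in Isabelle\<close>
  have "contrib_of T (r1, r2, s1, q / s1, t) = 0" for q
    unfolding contrib_of_def using assms(3) True
    by (intro prod_zero bexI[of _ 0]) (auto simp: lp_supp_def zero_prod_def)
  then show ?thesis
    by simp
next
  case False
  let ?ratio = "\<lambda>w q. (1 - mono_eval (- w) (r1, r2, s1, q / s1, t)) / (q - 1) ^ of_bool (w \<in> diag_monos)"
  have "\<forall>w\<in>lp_supp T. \<exists>L. L \<noteq> 0 \<and> (?ratio w \<longlongrightarrow> L) (at 1)"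
    using False by (intro ballI tendsto_weight_factor[OF assms(1) generic]) auto
  then obtain L where L: "\<forall>w\<in>lp_supp T. L w \<noteq> 0 \<and> (?ratio w \<longlongrightarrow> L w) (at 1)"
    by (rule bchoice[THEN exE])
  have "((\<lambda>q::complex. (q - 1) powi (- lp_mass diag_monos T)) \<longlongrightarrow> (1 - 1) powi (- lp_mass diag_monos T)) (at 1)"
    using assms(4) by (intro tendsto_power_int' tendsto_intros) simp
  moreover have "((\<lambda>q. \<Prod>w\<in>lp_supp T. ?ratio w q powi (- T w)) \<longlongrightarrow> (\<Prod>w\<in>lp_supp T. L w powi (- T w))) (at 1)"
    using L by (intro tendsto_prod tendsto_power_int) auto
  ultimately have "((\<lambda>q. (q - 1) powi (- lp_mass diag_monos T) * (\<Prod>w\<in>lp_supp T. ?ratio w q powi (- T w))) \<longlongrightarrow> 0) (at 1)"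
    using assms(4) tendsto_mult by fastforce
  moreover have "\<forall>\<^sub>F q in at 1. (q - 1) powi (- lp_mass diag_monos T) * (\<Prod>w\<in>lp_supp T. ?ratio w q powi (- T w))
      = contrib_of T (r1, r2, s1, q / s1, t)"
    using assms(3) by (auto simp: eventually_at_filter contrib_of_factor)
  ultimately show ?thesis
    by (rule Lim_transform_eventually)
qed

theorem proposition7:
  fixes M1 M2 :: nat and r1 r2 s1 t :: complex
  assumes nz: "r1 \<noteq> 0" "r2 \<noteq> 0" "s1 \<noteq> 0" "t \<noteq> 0"
    and generic: "\<forall>a b c d :: int.
        r1 powi a * r2 powi b * s1 powi c * t powi d = 1 \<longrightarrow> a = 0 \<and> b = 0 \<and> c = 0 \<and> d = 0"
  shows "((\<lambda>q. chi_M M1 M2 (r1, r2, s1, q / s1, t) - chi_Mring M1 M2 (r1, r2, s1, q / s1, t))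
            \<longlongrightarrow> 0) (at 1) \<and>
         (\<forall>p \<in> fixed_points M1 M2 - ring_fixed_points M1 M2.
           ((\<lambda>q. contrib p (r1, r2, s1, q / s1, t)) \<longlongrightarrow> 0) (at 1))"
proof -
  have vanishing: "((\<lambda>q. contrib p (r1, r2, s1, q / s1, t)) \<longlongrightarrow> 0) (at 1)"
    if p: "p \<in> fixed_points M1 M2 - ring_fixed_points M1 M2" for p
  proof -
    obtain Y1 Y0 Y2 where "p = (Y1, Y0, Y2)"
      by (cases p)
    then show ?thesis
      using p unfolding contrib_def
      by (auto intro!: tendsto_contrib_of_zero[OF nz(3) generic] finite_lp_supp_Tvir_fixed_point
          lp_mass_diag_Tvir_neg)
  qed
  have "chi_M M1 M2 z - chi_Mring M1 M2 z = (\<Sum>p\<in>fixed_points M1 M2 - ring_fixed_points M1 M2. contrib p z)" for z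
    unfolding chi_M_def chi_Mring_def
    by (rule sum_diff[symmetric]) (auto simp: finite_fixed_points ring_fixed_points_def)
  moreover have "((\<lambda>q. \<Sum>p\<in>fixed_points M1 M2 - ring_fixed_points M1 M2. contrib p (r1, r2, s1, q / s1, t))
      \<longlongrightarrow> 0) (at 1)"
    using vanishing by (rule tendsto_null_sum)
  ultimately show ?thesis
    using vanishing by simp
qed

end
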